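(* Let $n\ge1$, let $a=(a_m)_{m\ge0}$, $b=(b_m)_{m\ge0}$ be complex sequences with $b_0=0$ and $b_m\ne0$ for $m\ge1$, and let $\omega(u)=\sum_{i=1}^n\tilde T_{ii}(u)$ in $OY(\mathfrak{gl}_n,a,b)[[u^{-1}]]$. Then $[\omega(u),\omega(v)]=0$, i.e. all coefficients of $\omega(u)$ pairwise commute.
   Context: $OY(\mathfrak{gl}_n,a,b)$ is the unital associative $\mathbb C$-algebra with generators $\tilde t^{(r)}_{ij}$ ($1\le i,j\le n$, $r\ge1$) and defining relations $[\tilde t^{(r+1)}_{ij}+a_r\tilde t^{(r)}_{ij}+b_r\tilde t^{(r-1)}_{ij},\tilde t^{(s)}_{kl}]-[\tilde t^{(r)}_{ij},\tilde t^{(s+1)}_{kl}+a_s\tilde t^{(s)}_{kl}+b_s\tilde t^{(s-1)}_{kl}]=\tilde t^{(r)}_{kj}\tilde t^{(s)}_{il}-\tilde t^{(s)}_{kj}\tilde t^{(r)}_{il}$ for all $r,s\ge0$ and all $i,j,k,l$, with $\tilde t^{(0)}_{ij}=\delta_{ij}$, $\tilde t^{(-1)}_{ij}=0$; $\tilde T_{ij}(u)=\delta_{ij}+\sum_{r\ge1}\tilde t^{(r)}_{ij}u^{-r}$. *)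

theory Defs
  imports Complex_Main
begin

text \<open>A unital associative complex algebra is a ring A together with a
  unital ring homomorphism from the complex numbers into the centre of A.\<close>
definition complex_alg_embedding :: "(complex \<Rightarrow> 'a::ring_1) \<Rightarrow> bool" where
  "complex_alg_embedding e \<longleftrightarrow>
     e 1 = 1 \<and> (\<forall>x y. e (x + y) = e x + e y) \<and> (\<forall>x y. e (x * y) = e x * e y)
     \<and> (\<forall>c z. e c * z = z * e c)"

definition OY_ext :: "(nat \<Rightarrow> nat \<Rightarrow> nat \<Rightarrow> 'a::ring_1) \<Rightarrow> int \<Rightarrow> nat \<Rightarrow> nat \<Rightarrow> 'a" where
  "OY_ext t r i j = (if r < 0 then 0 else if r = 0 then (if i = j then 1 else 0) else t (nat r) i j)"

definition commutator :: "'a::ring \<Rightarrow> 'a \<Rightarrow> 'a" where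
  "commutator x y = x * y - y * x"

definition OY_relations ::
  "nat \<Rightarrow> (nat \<Rightarrow> complex) \<Rightarrow> (nat \<Rightarrow> complex) \<Rightarrow> (complex \<Rightarrow> 'a::ring_1)
     \<Rightarrow> (nat \<Rightarrow> nat \<Rightarrow> nat \<Rightarrow> 'a) \<Rightarrow> bool" where
  "OY_relations n a b e t \<longleftrightarrow>
    (\<forall>r s i j k l. i \<in> {1..n} \<longrightarrow> j \<in> {1..n} \<longrightarrow> k \<in> {1..n} \<longrightarrow> l \<in> {1..n} \<longrightarrow>
      (let T = OY_ext t in
        commutator (T (int r + 1) i j + e (a r) * T (int r) i j + e (b r) * T (int r - 1) i j)
                   (T (int s) k l)
        - commutator (T (int r) i j)
                   (T (int s + 1) k l + e (a s) * T (int s) k l + e (b s) * T (int s - 1) k l)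
        = T (int r) k j * T (int s) i l - T (int s) k j * T (int r) i l))"

text \<open>Coefficient of u^(-r) in omega(u) = sum_i T_ii(u), for r \<ge> 1.\<close>
definition omega_coeff :: "nat \<Rightarrow> (nat \<Rightarrow> nat \<Rightarrow> nat \<Rightarrow> 'a::ring_1) \<Rightarrow> nat \<Rightarrow> 'a" where
  "omega_coeff n t r = (\<Sum>i=1..n. t r i i)"

end

theory Submission
  imports Defs
begin

text \<open>Put D(r,s) = \<Sum>_{i,k} [t^(r)_ii, t^(s)_kk], the commutator of the coefficients of
  \<omega>(u), and F(r,s) = \<Sum>_{i,k} [t^(r)_ki, t^(s)_ik]. Summing the defining relations over
  i = j, k = l, respectively over i = l, j = k, shows that the difference operator \<delta> given by
  their left-hand side maps D to F and F to D, so \<delta>(D + F) = D + F and \<delta>(D - F) = -(D - F).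
  An equation \<delta>X = cX expresses X(r+1,s) through values of X with first argument r or r-1,
  and D, F vanish when r \<le> 0 or s \<le> 0; hence D + F and D - F vanish identically. Thus 2D = 0,
  and D = 0 because 2 is invertible in a complex algebra.\<close>

lemma commutator_add_left: "commutator (x + y) z = commutator x z + commutator y (z::'a::ring)"
  by (simp add: commutator_def algebra_simps)

lemma commutator_add_right: "commutator x (y + z) = commutator x y + commutator x (z::'a::ring)"
  by (simp add: commutator_def algebra_simps)

lemma commutator_central_mult_left:
  "c * z = z * c \<Longrightarrow> commutator (c * y) z = c * commutator y (z::'a::ring)"
  by (simp add: commutator_def algebra_simps flip: mult.assoc)

lemma commutator_central_mult_right:
  "c * y = y * c \<Longrightarrow> commutator y (c * z) = c * commutator y (z::'a::ring)"
  by (simp add: commutator_def algebra_simps flip: mult.assoc)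

lemma commutator_sum_left: "commutator (\<Sum>i\<in>A. f i) z = (\<Sum>i\<in>A. commutator (f i) (z::'a::ring))"
  by (simp add: commutator_def sum_distrib_right sum_distrib_left sum_subtractf)

lemma commutator_sum_right: "commutator z (\<Sum>i\<in>A. f i) = (\<Sum>i\<in>A. commutator (z::'a::ring) (f i))"
  by (simp add: commutator_def sum_distrib_right sum_distrib_left sum_subtractf)

lemma complex_alg_embedding_double_eq_0:
  fixes e :: "complex \<Rightarrow> 'a::ring_1" and x :: 'a
  assumes "complex_alg_embedding e" and "x + x = 0"
  shows "x = 0"
proof -
  have additive: "e (1/2) + e (1/2) = e (1/2 + 1/2)" and unital: "e 1 = 1"
    using assms(1) unfolding complex_alg_embedding_def by metis+
  have "0 = e (1/2) * (x + x)"
    using assms(2) by simp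
  also have "\<dots> = (e (1/2) + e (1/2)) * x"
    by (simp add: distrib_left distrib_right)
  finally show ?thesis
    by (simp add: additive unital)
qed

locale OY_relations_on =
  fixes I :: "'i set" and \<alpha> \<beta> :: "nat \<Rightarrow> 'a::ring_1" and T :: "int \<Rightarrow> 'i \<Rightarrow> 'i \<Rightarrow> 'a"
  assumes central_\<alpha>: "\<alpha> r * z = z * \<alpha> r"
    and central_\<beta>: "\<beta> r * z = z * \<beta> r"
    and central_nonpos: "p \<le> 0 \<Longrightarrow> T p i j * z = z * T p i j"
    and relation: "\<And>r s i j k l. i \<in> I \<Longrightarrow> j \<in> I \<Longrightarrow> k \<in> I \<Longrightarrow> l \<in> I \<Longrightarrow>
      commutator (T (int r + 1) i j + \<alpha> r * T (int r) i j + \<beta> r * T (int r - 1) i j) (T (int s) k l)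
      - commutator (T (int r) i j) (T (int s + 1) k l + \<alpha> s * T (int s) k l + \<beta> s * T (int s - 1) k l)
      = T (int r) k j * T (int s) i l - T (int s) k j * T (int r) i l"
begin

definition shift_defect :: "(int \<Rightarrow> int \<Rightarrow> 'a) \<Rightarrow> nat \<Rightarrow> nat \<Rightarrow> 'a" where
  "shift_defect X r s =
     X (int r + 1) (int s) + \<alpha> r * X (int r) (int s) + \<beta> r * X (int r - 1) (int s)
     - (X (int r) (int s + 1) + \<alpha> s * X (int r) (int s) + \<beta> s * X (int r) (int s - 1))"

definition trace_commutator :: "int \<Rightarrow> int \<Rightarrow> 'a" where
  "trace_commutator p q = (\<Sum>i\<in>I. \<Sum>k\<in>I. commutator (T p i i) (T q k k))"

definition cross_commutator :: "int \<Rightarrow> int \<Rightarrow> 'a" where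
  "cross_commutator p q = (\<Sum>i\<in>I. \<Sum>k\<in>I. commutator (T p k i) (T q i k))"

lemma shift_defect_add: "shift_defect (\<lambda>p q. X p q + Y p q) r s = shift_defect X r s + shift_defect Y r s"
  by (simp add: shift_defect_def algebra_simps)

lemma shift_defect_diff: "shift_defect (\<lambda>p q. X p q - Y p q) r s = shift_defect X r s - shift_defect Y r s"
  by (simp add: shift_defect_def algebra_simps)

lemma shift_defect_sum:
  "shift_defect (\<lambda>p q. \<Sum>x\<in>A. X x p q) r s = (\<Sum>x\<in>A. shift_defect (X x) r s)"
  by (simp add: shift_defect_def sum.distrib sum_subtractf sum_distrib_left)

lemma shift_defect_commutator:
  assumes "i \<in> I" "j \<in> I" "k \<in> I" "l \<in> I"
  shows "shift_defect (\<lambda>p q. commutator (T p i j) (T q k l)) r s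
           = T (int r) k j * T (int s) i l - T (int s) k j * T (int r) i l"
  using relation[OF assms, of r s]
  by (simp add: shift_defect_def commutator_add_left commutator_add_right
      commutator_central_mult_left[OF central_\<alpha>] commutator_central_mult_left[OF central_\<beta>]
      commutator_central_mult_right[OF central_\<alpha>] commutator_central_mult_right[OF central_\<beta>])

lemma shift_defect_trace_commutator: "shift_defect trace_commutator r s = cross_commutator (int r) (int s)"
proof -
  have "shift_defect trace_commutator r s
      = (\<Sum>i\<in>I. \<Sum>k\<in>I. T (int r) k i * T (int s) i k - T (int s) k i * T (int r) i k)"
    unfolding trace_commutator_def shift_defect_sum
    by (intro sum.cong refl shift_defect_commutator) auto
  also have "\<dots> = (\<Sum>i\<in>I. \<Sum>k\<in>I. T (int r) k i * T (int s) i k)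
      - (\<Sum>i\<in>I. \<Sum>k\<in>I. T (int s) k i * T (int r) i k)"
    by (simp add: sum_subtractf)
  also have "(\<Sum>i\<in>I. \<Sum>k\<in>I. T (int s) k i * T (int r) i k)
      = (\<Sum>k\<in>I. \<Sum>i\<in>I. T (int s) k i * T (int r) i k)"
    by (rule sum.swap)
  finally show ?thesis
    by (simp add: cross_commutator_def commutator_def sum_subtractf)
qed

lemma shift_defect_cross_commutator: "shift_defect cross_commutator r s = trace_commutator (int r) (int s)"
proof -
  have "shift_defect cross_commutator r s
      = (\<Sum>i\<in>I. \<Sum>k\<in>I. T (int r) i i * T (int s) k k - T (int s) i i * T (int r) k k)"
    unfolding cross_commutator_def shift_defect_sum
    by (intro sum.cong refl shift_defect_commutator) auto
  also have "\<dots> = (\<Sum>i\<in>I. \<Sum>k\<in>I. T (int r) i i * T (int s) k k)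
      - (\<Sum>i\<in>I. \<Sum>k\<in>I. T (int s) i i * T (int r) k k)"
    by (simp add: sum_subtractf)
  also have "(\<Sum>i\<in>I. \<Sum>k\<in>I. T (int s) i i * T (int r) k k)
      = (\<Sum>k\<in>I. \<Sum>i\<in>I. T (int s) i i * T (int r) k k)"
    by (rule sum.swap)
  finally show ?thesis
    by (simp add: trace_commutator_def commutator_def sum_subtractf)
qed

lemma commutator_nonpos_left: "p \<le> 0 \<Longrightarrow> commutator (T p i j) z = 0"
  by (simp add: commutator_def central_nonpos)

lemma commutator_nonpos_right: "q \<le> 0 \<Longrightarrow> commutator z (T q k l) = 0"
  by (simp add: commutator_def central_nonpos)

lemma shift_defect_eigenfunction_eq_0:
  assumes boundary: "\<And>p q. p \<le> 0 \<or> q \<le> 0 \<Longrightarrow> X p q = 0"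
    and eigen: "\<And>r s. shift_defect X r s = c * X (int r) (int s)"
  shows "X (int r) q = 0"
proof -
  have "X (int r) q = 0 \<and> X (int r - 1) q = 0" for q
  proof (induction r arbitrary: q)
    case 0
    then show ?case by (simp add: boundary)
  next
    case (Suc r)
    have "X (int r + 1) q = 0"
    proof (cases "q \<le> 0")
      case True
      then show ?thesis by (simp add: boundary)
    next
      case False
      then obtain s where q: "q = int s" by (metis nle_le nonneg_int_cases)
      have "X (int r + 1) (int s) = c * X (int r) (int s) - \<alpha> r * X (int r) (int s)
          - \<beta> r * X (int r - 1) (int s)
          + (X (int r) (int s + 1) + \<alpha> s * X (int r) (int s) + \<beta> s * X (int r) (int s - 1))"
        using eigen[of r s] by (simp add: shift_defect_def algebra_simps)
      then show ?thesis using Suc.IH q by simp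
    qed
    then show ?case using Suc.IH by (simp add: add.commute[of 1])
  qed
  then show ?thesis by blast
qed

lemma trace_commutator_double_eq_0:
  "trace_commutator (int r) (int s) + trace_commutator (int r) (int s) = 0"
proof -
  have boundary: "trace_commutator p q = 0" "cross_commutator p q = 0" if "p \<le> 0 \<or> q \<le> 0" for p q
    using that by (auto simp: trace_commutator_def cross_commutator_def
        commutator_nonpos_left commutator_nonpos_right)
  have "trace_commutator (int r) (int s) + cross_commutator (int r) (int s) = 0"
    by (rule shift_defect_eigenfunction_eq_0[where c = 1])
      (simp_all add: boundary shift_defect_add shift_defect_trace_commutator
        shift_defect_cross_commutator add.commute)
  moreover have "trace_commutator (int r) (int s) - cross_commutator (int r) (int s) = 0"
    by (rule shift_defect_eigenfunction_eq_0[where c = "-1"])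
      (simp_all add: boundary shift_defect_diff shift_defect_trace_commutator
        shift_defect_cross_commutator)
  ultimately show ?thesis
    by (metis add_diff_cancel_left' diff_add_cancel diff_zero)
qed

end

lemma OY_relations_on_OY_ext:
  assumes "complex_alg_embedding e" and "OY_relations n a b e t"
  shows "OY_relations_on {1..n} (\<lambda>r. e (a r)) (\<lambda>r. e (b r)) (OY_ext t)"
proof -
  have central: "e c * z = z * e c" for c z
    using assms(1) unfolding complex_alg_embedding_def by blast
  have central_nonpos: "p \<le> 0 \<Longrightarrow> OY_ext t p i j * z = z * OY_ext t p i j" for p i j z
    by (simp add: OY_ext_def)
  show ?thesis
    using central central_nonpos assms(2) unfolding OY_relations_on_def OY_relations_def Let_def
    by blast
qed

theorem mainTheorem3:
  fixes n :: nat and a b :: "nat \<Rightarrow> complex"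
    and e :: "complex \<Rightarrow> 'A::ring_1" and t :: "nat \<Rightarrow> nat \<Rightarrow> nat \<Rightarrow> 'A"
  assumes "n \<ge> 1"
    and "b 0 = 0" and "\<And>m. m \<ge> 1 \<Longrightarrow> b m \<noteq> 0"
    and "complex_alg_embedding e"
    and "OY_relations n a b e t"
  shows "\<forall>r s. r \<ge> 1 \<longrightarrow> s \<ge> 1 \<longrightarrow>
           omega_coeff n t r * omega_coeff n t s = omega_coeff n t s * omega_coeff n t r"
proof (intro allI impI)
  fix r s :: nat
  assume "r \<ge> 1" "s \<ge> 1"
  interpret OY_relations_on "{1..n}" "\<lambda>r. e (a r)" "\<lambda>r. e (b r)" "OY_ext t"
    using assms(4,5) by (rule OY_relations_on_OY_ext)
  have "commutator (omega_coeff n t r) (omega_coeff n t s) = trace_commutator (int r) (int s)"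
    using \<open>r \<ge> 1\<close> \<open>s \<ge> 1\<close> unfolding omega_coeff_def trace_commutator_def
    by (simp add: OY_ext_def commutator_sum_left commutator_sum_right) (rule sum.swap)
  also have "\<dots> = 0"
    using complex_alg_embedding_double_eq_0[OF assms(4) trace_commutator_double_eq_0] .
  finally show "omega_coeff n t r * omega_coeff n t s = omega_coeff n t s * omega_coeff n t r"
    by (simp add: commutator_def)
qed

end
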